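(* Let $g\ge0$, $n\ge1$. Let $[Ch_1]$ and $[Ch_2]$ be two chambers up to symmetry, and let $\mathcal{A}\in Ch_1\in[Ch_1]$, $\mathcal{B}\in Ch_2\in[Ch_2]$ be weight data. If $[Ch_1]\le[Ch_2]$, there is an inclusion as a full subcategory $\mathcal{G}_{g,\mathcal{A}}\hookrightarrow\mathcal{G}_{g,\mathcal{B}}$; it is an isomorphism of categories if $[Ch_1]=[Ch_2]$.
   Context: A weight datum is $\mathcal{A}=(a_1,\dots,a_n)$ with $a_i\in\mathbb{Q}\cap(0,1]$ and $2g-2+\sum_i a_i>0$; $\mathcal{D}_{g,n}\subset\mathbb{R}^n$ is the set of weight data. For $S\subseteq\{1,\dots,n\}$ with $2\le|S|\le n$ if $g\ge1$ (resp. $2\le|S|\le n-2$ if $g=0$), the wall $w_S$ is the locus $\sum_{i\in S}a_i=1$. The chambers are the connected components of the complement in $\mathcal{D}_{g,n}$ of all walls; each is determined by the direction ($<1$ or $>1$) of $\sum_{i\in S}a_i$ for each such $S$. The set $\mathbf{K}$ of chambers is partially ordered by $Ch_1\le Ch_2$ iff for every such $S$, $\sum_{i\in S}a_i>1$ on $Ch_1$ implies $\sum_{i\in S}b_i>1$ on $Ch_2$. $S_n$ acts on $\mathcal{D}_{g,n}$ by permuting coordinates and hence on $\mathbf{K}$; a chamber up to symmetry $[Ch]$ is the $S_n$-orbit of $Ch$, and $[Ch_1]\le[Ch_2]$ iff there are $Ch_1'\in[Ch_1]$, $Ch_2'\in[Ch_2]$ with $Ch_1'\le Ch_2'$. A $(g,\mathcal{A})$-stable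 graph is a finite connected graph $G$ (loops and multiple edges allowed) with vertex weight $w:V(G)\to\mathbb{Z}_{\ge0}$ and $n$ legs labelled $1,\dots,n$ attached via $m:\{1,\dots,n\}\to V(G)$, with $b_1(G)+\sum_v w(v)=g$ and $2w(v)-2+|v|_E+|v|_{\mathcal{A}}>0$ for every vertex $v$, where $|v|_E$ is the number of edge half-edges at $v$ (loops counted twice) and $|v|_{\mathcal{A}}=\sum_{m(i)=v}a_i$. $\mathcal{G}_{g,\mathcal{A}}$ is the category whose objects are $(g,\mathcal{A})$-stable graphs and whose morphisms are compositions of isomorphisms of weighted marked graphs and weighted edge contractions. *)

theory Defs
  imports "HOL-Analysis.Analysis"
begin

text \<open>Legs are indexed by a finite type 'n (n = CARD('n) >= 1); a weight datum is
  a vector in real^'n.\<close>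

definition wsum :: "'n set \<Rightarrow> real^('n::finite) \<Rightarrow> real" where
  "wsum S a = (\<Sum>i\<in>S. a $ i)"

definition weight_datum :: "nat \<Rightarrow> real^('n::finite) \<Rightarrow> bool" where
  "weight_datum g a \<longleftrightarrow>
     (\<forall>i. a $ i \<in> \<rat> \<and> 0 < a $ i \<and> a $ i \<le> 1) \<and>
     2 * real g - 2 + (\<Sum>i\<in>UNIV. a $ i) > 0"

definition is_wall :: "nat \<Rightarrow> ('n::finite) set \<Rightarrow> bool" where
  "is_wall g S \<longleftrightarrow> 2 \<le> card S \<and>
     (if g \<ge> 1 then card S \<le> CARD('n) else card S + 2 \<le> CARD('n))"

definition off_walls :: "nat \<Rightarrow> real^('n::finite) \<Rightarrow> bool" where
  "off_walls g a \<longleftrightarrow> (\<forall>S. is_wall g S \<longrightarrow> wsum S a \<noteq> 1)"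

definition chamber :: "nat \<Rightarrow> real^('n::finite) \<Rightarrow> (real^'n) set" where
  "chamber g a = {b. weight_datum g b \<and> off_walls g b \<and>
      (\<forall>S::'n set. is_wall g S \<longrightarrow> (wsum S b > 1 \<longleftrightarrow> wsum S a > 1))}"

definition chambers :: "nat \<Rightarrow> (real^('n::finite)) set set" where
  "chambers g = {chamber g a | a. weight_datum g a \<and> off_walls g a}"

definition chamber_le :: "nat \<Rightarrow> (real^('n::finite)) set \<Rightarrow> (real^'n) set \<Rightarrow> bool" where
  "chamber_le g C1 C2 \<longleftrightarrow>
     (\<forall>S::'n set. is_wall g S \<longrightarrow>
        (\<forall>a\<in>C1. wsum S a > 1) \<longrightarrow> (\<forall>b\<in>C2. wsum S b > 1))"

definition perm_act :: "('n::finite \<Rightarrow> 'n) \<Rightarrow> real^'n \<Rightarrow> real^'n" where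
  "perm_act \<sigma> a = (\<chi> i. a $ (inv \<sigma> i))"

definition sym_class :: "(real^('n::finite)) set \<Rightarrow> (real^'n) set set" where
  "sym_class C = {perm_act \<sigma> ` C | \<sigma>. \<sigma> permutes (UNIV :: 'n set)}"

definition class_le :: "nat \<Rightarrow> (real^('n::finite)) set set \<Rightarrow> (real^'n) set set \<Rightarrow> bool" where
  "class_le g P Q \<longleftrightarrow> (\<exists>C1\<in>P. \<exists>C2\<in>Q. chamber_le g C1 C2)"

text \<open>Vertices and half-edges are natural numbers; opp is the fixed-point-free
  involution pairing half-edges into edges (a loop is a pair of half-edges at the same
  vertex); att attaches half-edges to vertices; wt is the vertex weight; leg i is the
  vertex carrying leg i.  Data outside the carriers is normalised to undefined.\<close>

record 'n sgraph =
  verts :: "nat set"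
  hes   :: "nat set"
  att   :: "nat \<Rightarrow> nat"
  opp   :: "nat \<Rightarrow> nat"
  wt    :: "nat \<Rightarrow> nat"
  leg   :: "'n \<Rightarrow> nat"

definition adj :: "'n sgraph \<Rightarrow> (nat \<times> nat) set" where
  "adj G = {(att G h, att G (opp G h)) | h. h \<in> hes G}"

definition wf_graph :: "'n sgraph \<Rightarrow> bool" where
  "wf_graph G \<longleftrightarrow>
     finite (verts G) \<and> verts G \<noteq> {} \<and> finite (hes G) \<and>
     att G \<in> hes G \<rightarrow> verts G \<and> opp G \<in> hes G \<rightarrow> hes G \<and>
     (\<forall>h\<in>hes G. opp G (opp G h) = h \<and> opp G h \<noteq> h) \<and>
     (\<forall>i. leg G i \<in> verts G) \<and>
     att G \<in> extensional (hes G) \<and> opp G \<in> extensional (hes G) \<and>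
     wt G \<in> extensional (verts G) \<and>
     (\<forall>u\<in>verts G. \<forall>v\<in>verts G. (u, v) \<in> (adj G)\<^sup>*)"

definition first_betti :: "'n sgraph \<Rightarrow> int" where
  "first_betti G = int (card (hes G) div 2) - int (card (verts G)) + 1"

definition edge_valence :: "'n sgraph \<Rightarrow> nat \<Rightarrow> nat" where
  "edge_valence G v = card {h \<in> hes G. att G h = v}"

definition leg_weight :: "real^('n::finite) \<Rightarrow> 'n sgraph \<Rightarrow> nat \<Rightarrow> real" where
  "leg_weight a G v = (\<Sum>i\<in>{i. leg G i = v}. a $ i)"

definition stable_graph :: "nat \<Rightarrow> real^('n::finite) \<Rightarrow> 'n sgraph \<Rightarrow> bool" where
  "stable_graph g a G \<longleftrightarrow> wf_graph G \<and>
     first_betti G + (\<Sum>v\<in>verts G. int (wt G v)) = int g \<and>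
     (\<forall>v\<in>verts G. 2 * real (wt G v) - 2 + real (edge_valence G v) + leg_weight a G v > 0)"

text \<open>A morphism f : G \<rightarrow> G' consists of a vertex map G \<rightarrow> G' and the map sending
  each half-edge of G' to the half-edge of G it comes from.\<close>

record 'n gmor =
  src  :: "'n sgraph"
  tgt  :: "'n sgraph"
  vmap :: "nat \<Rightarrow> nat"
  hmap :: "nat \<Rightarrow> nat"

definition graph_map :: "'n gmor \<Rightarrow> bool" where
  "graph_map f \<longleftrightarrow>
     (let G = src f; G' = tgt f in
       vmap f \<in> verts G \<rightarrow> verts G' \<and> vmap f ` verts G = verts G' \<and>
       hmap f \<in> hes G' \<rightarrow> hes G \<and> inj_on (hmap f) (hes G') \<and>
       vmap f \<in> extensional (verts G) \<and> hmap f \<in> extensional (hes G') \<and>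
       (\<forall>h\<in>hes G'. hmap f (opp G' h) = opp G (hmap f h)) \<and>
       (\<forall>h\<in>hes G'. vmap f (att G (hmap f h)) = att G' h) \<and>
       (\<forall>i. vmap f (leg G i) = leg G' i))"

definition is_graph_iso :: "'n gmor \<Rightarrow> bool" where
  "is_graph_iso f \<longleftrightarrow> graph_map f \<and>
     hmap f ` hes (tgt f) = hes (src f) \<and>
     inj_on (vmap f) (verts (src f)) \<and>
     (\<forall>v\<in>verts (src f). wt (tgt f) (vmap f v) = wt (src f) v)"

definition is_edge_contraction :: "'n gmor \<Rightarrow> bool" where
  "is_edge_contraction f \<longleftrightarrow> graph_map f \<and>
     (let G = src f; G' = tgt f in
       (\<exists>h\<in>hes G.
          hes G - hmap f ` hes G' = {h, opp G h} \<and>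
          (\<forall>x\<in>verts G. \<forall>y\<in>verts G.
              vmap f x = vmap f y \<longleftrightarrow> x = y \<or> {x, y} = {att G h, att G (opp G h)}) \<and>
          (\<forall>v'\<in>verts G'. wt G' v' =
              (\<Sum>v\<in>{v\<in>verts G. vmap f v = v'}. wt G v) +
              (if att G h = att G (opp G h) \<and> vmap f (att G h) = v' then 1 else 0))))"

definition gcomp :: "'n gmor \<Rightarrow> 'n gmor \<Rightarrow> 'n gmor" where
  "gcomp k f = \<lparr> src = src f, tgt = tgt k,
      vmap = restrict (vmap k \<circ> vmap f) (verts (src f)),
      hmap = restrict (hmap f \<circ> hmap k) (hes (tgt k)) \<rparr>"

definition gid :: "'n sgraph \<Rightarrow> 'n gmor" where
  "gid G = \<lparr> src = G, tgt = G, vmap = restrict id (verts G), hmap = restrict id (hes G) \<rparr>"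

definition obj :: "nat \<Rightarrow> real^('n::finite) \<Rightarrow> 'n sgraph set" where
  "obj g a = {G. stable_graph g a G}"

inductive_set mor :: "nat \<Rightarrow> real^('n::finite) \<Rightarrow> 'n gmor set" for g a where
  iso: "is_graph_iso f \<Longrightarrow> src f \<in> obj g a \<Longrightarrow> tgt f \<in> obj g a \<Longrightarrow> f \<in> mor g a"
| contr: "is_edge_contraction f \<Longrightarrow> src f \<in> obj g a \<Longrightarrow> tgt f \<in> obj g a \<Longrightarrow> f \<in> mor g a"
| comp: "f \<in> mor g a \<Longrightarrow> k \<in> mor g a \<Longrightarrow> tgt f = src k \<Longrightarrow> gcomp k f \<in> mor g a"

definition Hom :: "nat \<Rightarrow> real^('n::finite) \<Rightarrow> 'n sgraph \<Rightarrow> 'n sgraph \<Rightarrow> 'n gmor set" where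
  "Hom g a X Y = {f \<in> mor g a. src f = X \<and> tgt f = Y}"

definition is_functor ::
  "nat \<Rightarrow> real^('n::finite) \<Rightarrow> real^'n \<Rightarrow> ('n sgraph \<Rightarrow> 'n sgraph) \<Rightarrow> ('n gmor \<Rightarrow> 'n gmor) \<Rightarrow> bool" where
  "is_functor g a b Fo Fm \<longleftrightarrow>
     (\<forall>X\<in>obj g a. Fo X \<in> obj g b) \<and>
     (\<forall>f\<in>mor g a. Fm f \<in> Hom g b (Fo (src f)) (Fo (tgt f))) \<and>
     (\<forall>X\<in>obj g a. Fm (gid X) = gid (Fo X)) \<and>
     (\<forall>f\<in>mor g a. \<forall>k\<in>mor g a. tgt f = src k \<longrightarrow> Fm (gcomp k f) = gcomp (Fm k) (Fm f))"

definition full_embedding ::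
  "nat \<Rightarrow> real^('n::finite) \<Rightarrow> real^'n \<Rightarrow> ('n sgraph \<Rightarrow> 'n sgraph) \<Rightarrow> ('n gmor \<Rightarrow> 'n gmor) \<Rightarrow> bool" where
  "full_embedding g a b Fo Fm \<longleftrightarrow> is_functor g a b Fo Fm \<and>
     inj_on Fo (obj g a) \<and>
     (\<forall>X\<in>obj g a. \<forall>Y\<in>obj g a. bij_betw Fm (Hom g a X Y) (Hom g b (Fo X) (Fo Y)))"

definition cat_isomorphism ::
  "nat \<Rightarrow> real^('n::finite) \<Rightarrow> real^'n \<Rightarrow> ('n sgraph \<Rightarrow> 'n sgraph) \<Rightarrow> ('n gmor \<Rightarrow> 'n gmor) \<Rightarrow> bool" where
  "cat_isomorphism g a b Fo Fm \<longleftrightarrow> full_embedding g a b Fo Fm \<and> bij_betw Fo (obj g a) (obj g b)"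

end

theory Submission
  imports Defs
begin

(* Stability of a graph depends on the weights only at its leaves, the vertices of weight 0
   and valence 1: their legs must have total weight > 1, while every other vertex only needs a
   leg when 2 w(v) + valence = 2 (an isolated vertex forces g = 0, where all legs together weigh
   more than 2).  A leg set of weight > 1 is either a heavy wall or, for g = 0, misses at most one
   leg; so if every wall heavy for A is heavy for B, each A-stable graph is B-stable.  Fullness:
   an isomorphism or an edge contraction creates a leaf only as the image of a leaf whose legs it
   keeps, so a B-morphism out of an A-stable graph stays among A-stable graphs.  The symmetric
   group acts by relabelling legs, and when the two classes coincide the sets of heavy walls
   have the same size, hence are equal. *)

definition heavy_walls :: "nat \<Rightarrow> real^('n::finite) \<Rightarrow> 'n set set" where
  "heavy_walls g a = {S. is_wall g S \<and> wsum S a > 1}"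

definition leaf_vertex :: "'n sgraph \<Rightarrow> nat \<Rightarrow> bool" where
  "leaf_vertex G v \<longleftrightarrow> v \<in> verts G \<and> wt G v = 0 \<and> edge_valence G v = 1"

lemma leg_weight_eq_wsum: "leg_weight a G v = wsum {i. leg G i = v} a"
  by (simp add: leg_weight_def wsum_def)

lemma leg_weight_nonneg: "weight_datum g a \<Longrightarrow> 0 \<le> leg_weight a G v"
  unfolding leg_weight_def weight_datum_def by (intro sum_nonneg) (auto intro: less_imp_le)

lemma leg_weight_pos_iff:
  assumes "weight_datum g a"
  shows "0 < leg_weight a G v \<longleftrightarrow> (\<exists>i. leg G i = v)"
proof
  assume pos: "0 < leg_weight a G v"
  show "\<exists>i. leg G i = v"
  proof (rule ccontr)
    assume "\<nexists>i. leg G i = v"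
    then have "leg_weight a G v = 0" by (simp add: leg_weight_def)
    with pos show False by simp
  qed
next
  assume "\<exists>i. leg G i = v"
  then obtain i where "leg G i = v" ..
  then have "a $ i \<le> leg_weight a G v"
    using assms unfolding leg_weight_def
    by (intro member_le_sum) (auto simp: weight_datum_def less_imp_le)
  moreover have "0 < a $ i" using assms by (simp add: weight_datum_def)
  ultimately show "0 < leg_weight a G v" by simp
qed

lemma isolated_vertex_graph:
  assumes wf: "wf_graph G" and genus: "first_betti G + (\<Sum>v\<in>verts G. int (wt G v)) = int g"
    and v: "v \<in> verts G" and val: "edge_valence G v = 0" and w: "wt G v = 0"
  shows "verts G = {v} \<and> g = 0"
proof -
  have fin: "finite (hes G)" and att: "att G \<in> hes G \<rightarrow> verts G"
    and conn: "\<forall>u\<in>verts G. (v, u) \<in> (adj G)\<^sup>*" using wf v by (auto simp: wf_graph_def)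
  have no_half_edge: "att G k \<noteq> v" if "k \<in> hes G" for k
    using val fin that by (auto simp: edge_valence_def)
  have verts: "verts G = {v}"
  proof (rule ccontr)
    assume "verts G \<noteq> {v}"
    then obtain u where "u \<in> verts G" "u \<noteq> v" using v by auto
    with conn have "(v, u) \<in> (adj G)\<^sup>*" "v \<noteq> u" by auto
    then show False
      by (cases rule: converse_rtranclE) (use no_half_edge in \<open>auto simp: adj_def\<close>)
  qed
  moreover have "hes G = {}" using verts att no_half_edge by fastforce
  ultimately show ?thesis using genus w by (simp add: first_betti_def)
qed

lemma stable_graph_transfer:
  assumes wa: "weight_datum g a" and wb: "weight_datum g b" and st: "stable_graph g b G"
    and leaves: "\<And>v. leaf_vertex G v \<Longrightarrow> 1 < leg_weight a G v"
  shows "stable_graph g a G"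
proof -
  have wf: "wf_graph G" and genus: "first_betti G + (\<Sum>v\<in>verts G. int (wt G v)) = int g"
    using st by (auto simp: stable_graph_def)
  have "0 < 2 * real (wt G v) - 2 + real (edge_valence G v) + leg_weight a G v"
    if v: "v \<in> verts G" for v
  proof -
    have st_v: "0 < 2 * real (wt G v) - 2 + real (edge_valence G v) + leg_weight b G v"
      using st v by (simp add: stable_graph_def)
    consider "3 \<le> 2 * wt G v + edge_valence G v" | "2 * wt G v + edge_valence G v = 2"
      | "wt G v = 0" "edge_valence G v = 1" | "wt G v = 0" "edge_valence G v = 0"
      by linarith
    then show ?thesis
    proof cases
      case 1
      then show ?thesis using leg_weight_nonneg[OF wa, of G v] by linarith
    next
      case 2
      then have "0 < leg_weight b G v" using st_v by linarith
      then have "0 < leg_weight a G v"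
        using leg_weight_pos_iff[OF wa] leg_weight_pos_iff[OF wb] by blast
      then show ?thesis using 2 by linarith
    next
      case 3
      then show ?thesis using leaves[of v] v by (simp add: leaf_vertex_def)
    next
      case 4
      with isolated_vertex_graph[OF wf genus v] have "verts G = {v}" "g = 0" by auto
      then have "leg_weight a G v = (\<Sum>i\<in>UNIV. a $ i)"
        using wf by (auto simp: leg_weight_def wf_graph_def)
      then show ?thesis using wa 4 \<open>g = 0\<close> by (simp add: weight_datum_def)
    qed
  qed
  then show ?thesis using wf genus by (simp add: stable_graph_def)
qed

lemma stable_graph_leaf_vertex:
  "stable_graph g a G \<Longrightarrow> leaf_vertex G v \<Longrightarrow> 1 < leg_weight a G v"
  by (auto simp: stable_graph_def leaf_vertex_def)

lemma wsum_gt_one_mono: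
  fixes a b :: "real^('n::finite)"
  assumes wa: "weight_datum g a" and wb: "weight_datum g b"
    and heavy: "heavy_walls g a \<subseteq> heavy_walls g b" and S: "1 < wsum S a"
  shows "1 < wsum S b"
proof (cases "is_wall g S")
  case True
  then show ?thesis using heavy S by (auto simp: heavy_walls_def)
next
  case False
  have "wsum S a \<le> real (card S)"
    using wa sum_bounded_above[of S "\<lambda>i. a $ i" 1] by (simp add: wsum_def weight_datum_def)
  then have "2 \<le> card S" using S by linarith
  moreover have card_S: "card S \<le> CARD('n)" by (rule card_mono) auto
  ultimately have "g = 0" and "CARD('n) < card S + 2"
    using False by (auto simp: is_wall_def split: if_splits)
  then have "card (UNIV - S) \<le> 1" using card_S by (simp add: card_Diff_subset)
  then have "(\<Sum>i\<in>UNIV - S. b $ i) \<le> 1"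
    using wb sum_bounded_above[of "UNIV - S" "\<lambda>i. b $ i" 1] by (simp add: weight_datum_def)
  moreover have "(\<Sum>i\<in>UNIV. b $ i) = wsum S b + (\<Sum>i\<in>UNIV - S. b $ i)"
    unfolding wsum_def by (metis add.commute finite sum.subset_diff top_greatest)
  ultimately show ?thesis using wb \<open>g = 0\<close> by (simp add: weight_datum_def)
qed

lemma stable_graph_mono:
  fixes a b :: "real^('n::finite)"
  assumes wa: "weight_datum g a" and wb: "weight_datum g b"
    and heavy: "heavy_walls g a \<subseteq> heavy_walls g b" and st: "stable_graph g a G"
  shows "stable_graph g b G"
  using wb wa st
proof (rule stable_graph_transfer)
  fix v assume "leaf_vertex G v"
  then have "1 < leg_weight a G v" using stable_graph_leaf_vertex[OF st] by blast
  then show "1 < leg_weight b G v"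
    using wsum_gt_one_mono[OF wa wb heavy] by (simp add: leg_weight_eq_wsum)
qed

lemma graph_mapD:
  assumes "graph_map f"
  shows "vmap f \<in> verts (src f) \<rightarrow> verts (tgt f)" "vmap f ` verts (src f) = verts (tgt f)"
    "hmap f \<in> hes (tgt f) \<rightarrow> hes (src f)" "inj_on (hmap f) (hes (tgt f))"
    "\<And>k. k \<in> hes (tgt f) \<Longrightarrow> vmap f (att (src f) (hmap f k)) = att (tgt f) k"
    "\<And>i. vmap f (leg (src f) i) = leg (tgt f) i"
  using assms by (auto simp: graph_map_def Let_def)

lemma edge_valence_graph_map:
  assumes gm: "graph_map f" and v: "v' \<in> verts (tgt f)"
  shows "edge_valence (tgt f) v' = card {k \<in> hmap f ` hes (tgt f). vmap f (att (src f) k) = v'}"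
proof -
  let ?E = "{h' \<in> hes (tgt f). att (tgt f) h' = v'}"
  have "inj_on (hmap f) ?E" using graph_mapD(4)[OF gm] by (auto intro: inj_on_subset)
  then have "card (hmap f ` ?E) = card ?E" by (rule card_image)
  moreover have "hmap f ` ?E = {k \<in> hmap f ` hes (tgt f). vmap f (att (src f) k) = v'}"
  proof (intro equalityI subsetI)
    fix k assume "k \<in> hmap f ` ?E"
    then show "k \<in> {k \<in> hmap f ` hes (tgt f). vmap f (att (src f) k) = v'}"
      using graph_mapD(5)[OF gm] by blast
  next
    fix k assume "k \<in> {k \<in> hmap f ` hes (tgt f). vmap f (att (src f) k) = v'}"
    then obtain h' where h': "h' \<in> hes (tgt f)" "k = hmap f h'" "vmap f (att (src f) k) = v'"
      by blast
    then have "att (tgt f) h' = v'" using graph_mapD(5)[OF gm h'(1)] by simp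
    then show "k \<in> hmap f ` ?E" using h' by blast
  qed
  ultimately show ?thesis by (simp add: edge_valence_def)
qed

lemma leg_weight_graph_map_mono:
  assumes gm: "graph_map f" and wa: "weight_datum g a"
  shows "leg_weight a (src f) x \<le> leg_weight a (tgt f) (vmap f x)"
  unfolding leg_weight_def using graph_mapD(6)[OF gm] wa
  by (intro sum_mono2) (auto simp: weight_datum_def less_imp_le)

lemma graph_iso_leaf_vertex_preimage:
  assumes iso: "is_graph_iso f" and wf: "wf_graph (src f)" and leaf: "leaf_vertex (tgt f) v'"
  shows "\<exists>x. leaf_vertex (src f) x \<and> vmap f x = v'"
proof -
  have gm: "graph_map f" and onto: "hmap f ` hes (tgt f) = hes (src f)"
    and inj: "inj_on (vmap f) (verts (src f))"
    and wt: "\<forall>x\<in>verts (src f). wt (tgt f) (vmap f x) = wt (src f) x"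
    using iso by (auto simp: is_graph_iso_def)
  obtain x where x: "x \<in> verts (src f)" "vmap f x = v'"
    using graph_mapD(2)[OF gm] leaf by (force simp: leaf_vertex_def)
  have "{k \<in> hmap f ` hes (tgt f). vmap f (att (src f) k) = v'} =
      {k \<in> hes (src f). att (src f) k = x}"
    using onto inj x wf by (auto simp: inj_on_def wf_graph_def)
  then have "edge_valence (src f) x = edge_valence (tgt f) v'"
    using edge_valence_graph_map[OF gm, of v'] leaf by (simp add: edge_valence_def leaf_vertex_def)
  then show ?thesis using x wt leaf by (auto simp: leaf_vertex_def)
qed

locale edge_contraction_along =
  fixes f :: "'n gmor" and h :: nat
  assumes graph_map: "graph_map f" and wf_src: "wf_graph (src f)" and h: "h \<in> hes (src f)"
    and removed: "hes (src f) - hmap f ` hes (tgt f) = {h, opp (src f) h}"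
    and fibres: "\<forall>x\<in>verts (src f). \<forall>y\<in>verts (src f).
       vmap f x = vmap f y \<longleftrightarrow> x = y \<or> {x, y} = {att (src f) h, att (src f) (opp (src f) h)}"
    and weights: "\<forall>v'\<in>verts (tgt f). wt (tgt f) v' =
       (\<Sum>v\<in>{v\<in>verts (src f). vmap f v = v'}. wt (src f) v) +
       (if att (src f) h = att (src f) (opp (src f) h) \<and> vmap f (att (src f) h) = v' then 1 else 0)"

lemma is_edge_contraction_along:
  "is_edge_contraction f \<Longrightarrow> wf_graph (src f) \<Longrightarrow> \<exists>h. edge_contraction_along f h"
  unfolding is_edge_contraction_def Let_def edge_contraction_along_def by blast

context edge_contraction_along
begin

abbreviation "x0 \<equiv> att (src f) h"
abbreviation "y0 \<equiv> att (src f) (opp (src f) h)"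

lemma endpoints: "x0 \<in> verts (src f)" "y0 \<in> verts (src f)"
  using h wf_src by (auto simp: wf_graph_def)

lemma same_fibre_iff:
  assumes "x \<in> verts (src f)" "y \<in> verts (src f)"
  shows "vmap f x = vmap f y \<longleftrightarrow> x = y \<or> (x = x0 \<and> y = y0) \<or> (x = y0 \<and> y = x0)"
  using fibres assms by (simp add: doubleton_eq_iff)

lemma edge_valence_image:
  assumes "x \<in> verts (src f)"
  shows "edge_valence (tgt f) (vmap f x) =
    card {k \<in> hes (src f) - {h, opp (src f) h}. vmap f (att (src f) k) = vmap f x}"
proof -
  have "hmap f ` hes (tgt f) = hes (src f) - {h, opp (src f) h}"
    using removed graph_mapD(3)[OF graph_map] by auto
  moreover have "vmap f x \<in> verts (tgt f)" using assms graph_mapD(1)[OF graph_map] by auto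
  ultimately show ?thesis using edge_valence_graph_map[OF graph_map] by simp
qed

lemma valence_weight_off_edge:
  assumes x: "x \<in> verts (src f)" "x \<noteq> x0" "x \<noteq> y0"
  shows "edge_valence (tgt f) (vmap f x) = edge_valence (src f) x
    \<and> wt (tgt f) (vmap f x) = wt (src f) x"
proof -
  have att: "att (src f) \<in> hes (src f) \<rightarrow> verts (src f)" using wf_src by (simp add: wf_graph_def)
  have "{k \<in> hes (src f) - {h, opp (src f) h}. vmap f (att (src f) k) = vmap f x} =
      {k \<in> hes (src f). att (src f) k = x}"
  proof -
    have "vmap f (att (src f) k) = vmap f x \<longleftrightarrow> att (src f) k = x" if "k \<in> hes (src f)" for k
      using same_fibre_iff[of "att (src f) k" x] att that x by auto
    then show ?thesis using x by auto
  qed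
  moreover have "{v \<in> verts (src f). vmap f v = vmap f x} = {x}" using x same_fibre_iff by auto
  moreover have "vmap f x0 \<noteq> vmap f x" using x same_fibre_iff endpoints by auto
  moreover have "vmap f x \<in> verts (tgt f)" using x graph_mapD(1)[OF graph_map] by auto
  ultimately show ?thesis using edge_valence_image[OF x(1)] weights by (simp add: edge_valence_def)
qed

lemma valence_weight_on_edge:
  assumes ne: "x0 \<noteq> y0"
  shows "edge_valence (tgt f) (vmap f x0) + 2 = edge_valence (src f) x0 + edge_valence (src f) y0
    \<and> wt (tgt f) (vmap f x0) = wt (src f) x0 + wt (src f) y0"
proof -
  let ?E = "\<lambda>x. {k \<in> hes (src f). att (src f) k = x}"
  have att: "att (src f) \<in> hes (src f) \<rightarrow> verts (src f)" and fin: "finite (hes (src f))"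
    and oh: "opp (src f) h \<in> hes (src f)" using wf_src h by (auto simp: wf_graph_def)
  have "{k \<in> hes (src f) - {h, opp (src f) h}. vmap f (att (src f) k) = vmap f x0} =
      (?E x0 - {h}) \<union> (?E y0 - {opp (src f) h})"
  proof -
    have "vmap f (att (src f) k) = vmap f x0 \<longleftrightarrow> att (src f) k = x0 \<or> att (src f) k = y0"
      if "k \<in> hes (src f)" for k
      using same_fibre_iff[of "att (src f) k" x0] att that endpoints by auto
    then show ?thesis using ne by auto
  qed
  moreover have
    "card ((?E x0 - {h}) \<union> (?E y0 - {opp (src f) h})) + 2 = card (?E x0) + card (?E y0)"
  proof -
    have fin_E: "finite (?E x)" for x using fin by simp
    have "card (?E x0) = Suc (card (?E x0 - {h}))" using h fin_E by (intro card.remove) auto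
    moreover have "card (?E y0) = Suc (card (?E y0 - {opp (src f) h}))"
      using oh fin_E by (intro card.remove) auto
    moreover have "card ((?E x0 - {h}) \<union> (?E y0 - {opp (src f) h})) =
        card (?E x0 - {h}) + card (?E y0 - {opp (src f) h})"
      using ne fin_E by (intro card_Un_disjoint) auto
    ultimately show ?thesis by simp
  qed
  moreover have "{v \<in> verts (src f). vmap f v = vmap f x0} = {x0, y0}"
    using same_fibre_iff endpoints by auto
  moreover have "vmap f x0 \<in> verts (tgt f)" using endpoints graph_mapD(1)[OF graph_map] by auto
  ultimately show ?thesis using edge_valence_image[OF endpoints(1)] weights ne
    by (simp add: edge_valence_def)
qed

lemma leaf_vertex_preimage:
  assumes leaf: "leaf_vertex (tgt f) v'"
  shows "\<exists>x. leaf_vertex (src f) x \<and> vmap f x = v'"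
proof -
  obtain x where x: "x \<in> verts (src f)" "vmap f x = v'"
    using graph_mapD(2)[OF graph_map] leaf by (force simp: leaf_vertex_def)
  show ?thesis
  proof (cases "x = x0 \<or> x = y0")
    case False
    then show ?thesis using valence_weight_off_edge[OF x(1)] x leaf by (auto simp: leaf_vertex_def)
  next
    case True
    then have v': "vmap f x0 = v'" "vmap f y0 = v'" using x same_fibre_iff endpoints by auto
    moreover have "v' \<in> verts (tgt f)" "wt (tgt f) v' = 0"
      using leaf by (simp_all add: leaf_vertex_def)
    \<comment> \<open>a contracted loop would give \<open>v'\<close> positive weight\<close>
    ultimately have ne: "x0 \<noteq> y0" using weights by auto
    have fin: "finite (hes (src f))" and oh: "opp (src f) h \<in> hes (src f)"
      using wf_src h by (auto simp: wf_graph_def)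
    have "0 < edge_valence (src f) x0" "0 < edge_valence (src f) y0"
      unfolding edge_valence_def using fin h oh by (auto simp: card_gt_0_iff)
    moreover have "edge_valence (src f) x0 + edge_valence (src f) y0 = 3"
      "wt (src f) x0 = 0" "wt (src f) y0 = 0"
      using valence_weight_on_edge[OF ne] v' leaf by (simp_all add: leaf_vertex_def)
    ultimately have "edge_valence (src f) x0 = 1 \<and> wt (src f) x0 = 0 \<or>
        edge_valence (src f) y0 = 1 \<and> wt (src f) y0 = 0"
      by linarith
    then have "leaf_vertex (src f) x0 \<or> leaf_vertex (src f) y0"
      using endpoints by (auto simp: leaf_vertex_def)
    then show ?thesis using v' by blast
  qed
qed

end

lemma stable_graph_step_transfer:
  assumes wc: "weight_datum g c" and wb: "weight_datum g b"
    and step: "is_graph_iso f \<or> is_edge_contraction f"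
    and sc: "stable_graph g c (src f)" and sb: "stable_graph g b (tgt f)"
  shows "stable_graph g c (tgt f)"
  using wc wb sb
proof (rule stable_graph_transfer)
  fix v' assume leaf: "leaf_vertex (tgt f) v'"
  have wf: "wf_graph (src f)" using sc by (simp add: stable_graph_def)
  have gm: "graph_map f" using step unfolding is_graph_iso_def is_edge_contraction_def by blast
  have "\<exists>x. leaf_vertex (src f) x \<and> vmap f x = v'"
  proof (cases "is_graph_iso f")
    case True
    then show ?thesis using graph_iso_leaf_vertex_preimage[OF _ wf leaf] by blast
  next
    case False
    then obtain h where "edge_contraction_along f h"
      using step is_edge_contraction_along[OF _ wf] by blast
    then show ?thesis using leaf by (rule edge_contraction_along.leaf_vertex_preimage)
  qed
  then obtain x where x: "leaf_vertex (src f) x" "vmap f x = v'" by blast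
  have "1 < leg_weight c (src f) x" using stable_graph_leaf_vertex[OF sc x(1)] .
  also have "\<dots> \<le> leg_weight c (tgt f) v'"
    using leg_weight_graph_map_mono[OF gm wc, of x] x(2) by simp
  finally show "1 < leg_weight c (tgt f) v'" .
qed

definition relabel :: "('n \<Rightarrow> 'n) \<Rightarrow> 'n sgraph \<Rightarrow> 'n sgraph" where
  "relabel p G = G\<lparr>leg := leg G \<circ> p\<rparr>"

definition relabel_mor :: "('n \<Rightarrow> 'n) \<Rightarrow> 'n gmor \<Rightarrow> 'n gmor" where
  "relabel_mor p f = f\<lparr>src := relabel p (src f), tgt := relabel p (tgt f)\<rparr>"

lemma relabel_simps [simp]:
  "verts (relabel p G) = verts G" "hes (relabel p G) = hes G" "att (relabel p G) = att G"
  "opp (relabel p G) = opp G" "wt (relabel p G) = wt G" "leg (relabel p G) = leg G \<circ> p"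
  "src (relabel_mor p f) = relabel p (src f)" "tgt (relabel_mor p f) = relabel p (tgt f)"
  "vmap (relabel_mor p f) = vmap f" "hmap (relabel_mor p f) = hmap f"
  by (simp_all add: relabel_def relabel_mor_def)

lemma relabel_relabel: "relabel p (relabel q G) = relabel (q \<circ> p) G"
  by (simp add: relabel_def o_assoc)

lemma relabel_mor_relabel_mor: "relabel_mor p (relabel_mor q f) = relabel_mor (q \<circ> p) f"
  by (simp add: relabel_mor_def relabel_relabel)

lemma relabel_id [simp]: "relabel id G = G"
  by (simp add: relabel_def)

lemma relabel_mor_id [simp]: "relabel_mor id f = f"
  by (simp add: relabel_mor_def)

lemma
  assumes "p permutes (UNIV :: 'n set)"
  shows relabel_inv_relabel: "relabel (inv p) (relabel p G) = G"
    and relabel_relabel_inv: "relabel p (relabel (inv p) G) = G"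
    and relabel_mor_inv_relabel_mor: "relabel_mor (inv p) (relabel_mor p f) = f"
    and relabel_mor_relabel_mor_inv: "relabel_mor p (relabel_mor (inv p) f) = f"
  using assms by (simp_all add: relabel_relabel relabel_mor_relabel_mor permutes_inv_o)

lemma adj_relabel [simp]: "adj (relabel p G) = adj G"
  by (simp add: adj_def)

lemma first_betti_relabel [simp]: "first_betti (relabel p G) = first_betti G"
  by (simp add: first_betti_def)

lemma edge_valence_relabel [simp]: "edge_valence (relabel p G) v = edge_valence G v"
  by (simp add: edge_valence_def)

lemma gcomp_relabel: "gcomp (relabel_mor p k) (relabel_mor p f) = relabel_mor p (gcomp k f)"
  by (simp add: gcomp_def relabel_mor_def relabel_def)

lemma gid_relabel: "relabel_mor p (gid X) = gid (relabel p X)"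
  by (simp add: gid_def relabel_mor_def relabel_def)

lemma all_surj_iff: "surj p \<Longrightarrow> (\<forall>i. P (p i)) \<longleftrightarrow> (\<forall>i. P i)"
  by (metis surjD)

lemma wf_graph_relabel: "surj p \<Longrightarrow> wf_graph (relabel p G) \<longleftrightarrow> wf_graph G"
  unfolding wf_graph_def relabel_simps adj_relabel o_def
  using all_surj_iff[of p "\<lambda>i. leg G i \<in> verts G"] by simp

lemma graph_map_relabel: "surj p \<Longrightarrow> graph_map (relabel_mor p f) \<longleftrightarrow> graph_map f"
  unfolding graph_map_def Let_def relabel_simps o_def
  using all_surj_iff[of p "\<lambda>i. vmap f (leg (src f) i) = leg (tgt f) i"] by simp

lemma is_graph_iso_relabel: "surj p \<Longrightarrow> is_graph_iso (relabel_mor p f) \<longleftrightarrow> is_graph_iso f"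
  unfolding is_graph_iso_def by (simp add: graph_map_relabel)

lemma is_edge_contraction_relabel:
  "surj p \<Longrightarrow> is_edge_contraction (relabel_mor p f) \<longleftrightarrow> is_edge_contraction f"
  unfolding is_edge_contraction_def Let_def relabel_simps by (simp only: graph_map_relabel)

lemma leg_weight_relabel:
  assumes p: "p permutes (UNIV :: 'n::finite set)"
  shows "leg_weight (perm_act p a) (relabel (inv p) G) v = leg_weight a G v"
proof -
  have "{j. leg G (inv p j) = v} = p ` {i. leg G i = v}"
    using p by (auto simp: permutes_inverses image_iff intro!: exI[of _ "inv p _"])
  then have "leg_weight (perm_act p a) (relabel (inv p) G) v =
      (\<Sum>j\<in>p ` {i. leg G i = v}. a $ inv p j)"
    by (simp add: leg_weight_def perm_act_def)
  also have "\<dots> = (\<Sum>i | leg G i = v. a $ inv p (p i))"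
    by (subst sum.reindex) (auto intro: inj_on_subset permutes_inj[OF p])
  also have "\<dots> = leg_weight a G v" using p by (simp add: leg_weight_def permutes_inverses)
  finally show ?thesis .
qed

lemma weight_datum_perm_act:
  assumes p: "p permutes (UNIV :: 'n::finite set)" and wa: "weight_datum g a"
  shows "weight_datum g (perm_act p a)"
proof -
  have "(\<Sum>i\<in>UNIV. perm_act p a $ i) = (\<Sum>i\<in>UNIV. a $ i)"
    unfolding perm_act_def using sum.permute[OF permutes_inv[OF p], of "\<lambda>i. a $ i"]
    by (simp add: o_def)
  then show ?thesis using wa by (simp add: weight_datum_def perm_act_def)
qed

lemma stable_graph_relabel:
  assumes p: "p permutes (UNIV :: 'n::finite set)"
  shows "stable_graph g (perm_act p a) (relabel (inv p) G) \<longleftrightarrow> stable_graph g a G"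
  using permutes_surj[OF permutes_inv[OF p]]
  by (simp add: stable_graph_def wf_graph_relabel leg_weight_relabel[OF p])

lemma perm_act_inv:
  assumes "p permutes (UNIV :: 'n::finite set)"
  shows "perm_act (inv p) (perm_act p x) = x"
  using assms by (simp add: perm_act_def vec_eq_iff permutes_inv_inv permutes_inverses)

lemma perm_act_id: "perm_act id x = x"
  by (simp add: perm_act_def vec_eq_iff)

lemma perm_act_comp:
  assumes "p permutes (UNIV :: 'n::finite set)" and "q permutes (UNIV :: 'n set)"
  shows "perm_act p (perm_act q x) = perm_act (p \<circ> q) x"
  using assms by (simp add: perm_act_def vec_eq_iff o_inv_distrib permutes_bij)

lemma mor_relabel:
  assumes p: "p permutes (UNIV :: 'n::finite set)" and f: "f \<in> mor g a"
  shows "relabel_mor (inv p) f \<in> mor g (perm_act p a)"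
  using f
proof (induction rule: mor.induct)
  case (iso f)
  then show ?case
    using permutes_surj[OF permutes_inv[OF p]]
    by (intro mor.iso) (auto simp: is_graph_iso_relabel obj_def stable_graph_relabel[OF p])
next
  case (contr f)
  then show ?case
    using permutes_surj[OF permutes_inv[OF p]]
    by (intro mor.contr) (auto simp: is_edge_contraction_relabel obj_def stable_graph_relabel[OF p])
next
  case (comp f k)
  then show ?case by (metis gcomp_relabel mor.comp relabel_simps(7,8))
qed

lemma obj_relabel:
  assumes p: "p permutes (UNIV :: 'n::finite set)"
  shows "bij_betw (relabel (inv p)) (obj g a) (obj g (perm_act p a))"
proof (rule bij_betw_byWitness[where f' = "relabel p"])
  show "relabel (inv p) ` obj g a \<subseteq> obj g (perm_act p a)"
    by (auto simp: obj_def stable_graph_relabel[OF p])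
  show "relabel p ` obj g (perm_act p a) \<subseteq> obj g a"
  proof
    fix G assume "G \<in> relabel p ` obj g (perm_act p a)"
    then obtain Y where "stable_graph g (perm_act p a) Y" "G = relabel p Y" by (auto simp: obj_def)
    then show "G \<in> obj g a"
      using stable_graph_relabel[OF p, of g a G] by (simp add: obj_def relabel_inv_relabel[OF p])
  qed
qed (simp_all add: relabel_inv_relabel[OF p] relabel_relabel_inv[OF p])

lemma Hom_relabel:
  assumes p: "p permutes (UNIV :: 'n::finite set)"
  shows "Hom g (perm_act p a) (relabel (inv p) X) (relabel (inv p) Y) =
    relabel_mor (inv p) ` Hom g a X Y" (is "?H = _")
proof
  show "relabel_mor (inv p) ` Hom g a X Y \<subseteq> ?H"
    using mor_relabel[OF p] by (auto simp: Hom_def)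
next
  show "?H \<subseteq> relabel_mor (inv p) ` Hom g a X Y"
  proof
    fix f assume f: "f \<in> ?H"
    have "relabel_mor p f \<in> mor g (perm_act (inv p) (perm_act p a))"
      using mor_relabel[OF permutes_inv[OF p], of f g "perm_act p a"] f
      by (simp add: Hom_def permutes_inv_inv[OF p])
    then have "relabel_mor p f \<in> mor g a" by (simp add: perm_act_inv[OF p])
    then have "relabel_mor p f \<in> Hom g a X Y"
      using f by (simp add: Hom_def relabel_relabel_inv[OF p])
    then show "f \<in> relabel_mor (inv p) ` Hom g a X Y"
      using relabel_mor_inv_relabel_mor[OF p] by (metis image_eqI)
  qed
qed

lemma mor_objs: "f \<in> mor g a \<Longrightarrow> src f \<in> obj g a \<and> tgt f \<in> obj g a"
  by (induction rule: mor.induct) (auto simp: gcomp_def)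

lemma mor_mono:
  assumes wc: "weight_datum g c" and wb: "weight_datum g b"
    and heavy: "heavy_walls g c \<subseteq> heavy_walls g b" and f: "f \<in> mor g c"
  shows "f \<in> mor g b"
  using f stable_graph_mono[OF wc wb heavy]
  by (induction rule: mor.induct) (auto intro: mor.intros simp: obj_def)

lemma mor_of_src_obj:
  assumes wc: "weight_datum g c" and wb: "weight_datum g b"
    and f: "f \<in> mor g b" and src: "src f \<in> obj g c"
  shows "f \<in> mor g c"
  using f src
proof (induction rule: mor.induct)
  case (iso f)
  then show ?case
    using stable_graph_step_transfer[OF wc wb, of f] by (auto intro: mor.iso simp: obj_def)
next
  case (contr f)
  then show ?case
    using stable_graph_step_transfer[OF wc wb, of f] by (auto intro: mor.contr simp: obj_def)
next
  case (comp f k)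
  then have "f \<in> mor g c" by (simp add: gcomp_def)
  with comp mor_objs have "k \<in> mor g c" by metis
  with \<open>f \<in> mor g c\<close> comp show ?case by (blast intro: mor.comp)
qed

lemma Hom_full_subcategory:
  assumes wc: "weight_datum g c" and wb: "weight_datum g b"
    and heavy: "heavy_walls g c \<subseteq> heavy_walls g b" and X: "X \<in> obj g c"
  shows "Hom g c X Y = Hom g b X Y"
  using mor_mono[OF wc wb heavy] mor_of_src_obj[OF wc wb] X by (auto simp: Hom_def)

lemma full_embedding_relabel:
  assumes p: "p permutes (UNIV :: 'n::finite set)"
    and wA: "weight_datum g A" and wB: "weight_datum g B"
    and heavy: "heavy_walls g (perm_act p A) \<subseteq> heavy_walls g B"
  shows "full_embedding g A B (relabel (inv p)) (relabel_mor (inv p))"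
proof -
  let ?c = "perm_act p A" and ?F = "relabel (inv p)" and ?Fm = "relabel_mor (inv p)"
  have wc: "weight_datum g ?c" using weight_datum_perm_act[OF p wA] .
  have objs: "bij_betw ?F (obj g A) (obj g ?c)" using obj_relabel[OF p] .
  have obj_sub: "obj g ?c \<subseteq> obj g B"
    using stable_graph_mono[OF wc wB heavy] by (auto simp: obj_def)
  have Hom: "Hom g B (?F X) (?F Y) = ?Fm ` Hom g A X Y" if "X \<in> obj g A" for X Y
    using Hom_relabel[OF p] Hom_full_subcategory[OF wc wB heavy] bij_betwE[OF objs] that by metis
  have "inj ?Fm" using relabel_mor_relabel_mor_inv[OF p] by (metis injI)
  then have bij_Hom: "bij_betw ?Fm (Hom g A X Y) (Hom g B (?F X) (?F Y))" if "X \<in> obj g A" for X Y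
    using Hom[OF that] by (simp add: bij_betw_def inj_on_subset[OF \<open>inj ?Fm\<close>])
  have "?Fm f \<in> Hom g B (?F (src f)) (?F (tgt f))" if "f \<in> mor g A" for f
    using Hom mor_objs[OF that] that by (auto simp: Hom_def)
  moreover have "?F X \<in> obj g B" if "X \<in> obj g A" for X
    using bij_betwE[OF objs] obj_sub that by blast
  ultimately have "is_functor g A B ?F ?Fm" by (simp add: is_functor_def gid_relabel gcomp_relabel)
  then show ?thesis using bij_Hom objs by (simp add: full_embedding_def bij_betw_def)
qed

lemma cat_isomorphism_relabel:
  assumes p: "p permutes (UNIV :: 'n::finite set)"
    and wA: "weight_datum g A" and wB: "weight_datum g B"
    and heavy: "heavy_walls g (perm_act p A) = heavy_walls g B"
  shows "cat_isomorphism g A B (relabel (inv p)) (relabel_mor (inv p))"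
proof -
  have wc: "weight_datum g (perm_act p A)" using weight_datum_perm_act[OF p wA] .
  have "obj g (perm_act p A) = obj g B"
    using stable_graph_mono[OF wc wB] stable_graph_mono[OF wB wc] heavy by (auto simp: obj_def)
  then show ?thesis
    using full_embedding_relabel[OF p wA wB] obj_relabel[OF p, of g A] heavy
    by (simp add: cat_isomorphism_def)
qed

lemma wsum_perm_act:
  assumes p: "p permutes (UNIV :: 'n::finite set)"
  shows "wsum S (perm_act p x) = wsum (inv p ` S) x"
proof -
  have "wsum (inv p ` S) x = (\<Sum>i\<in>S. x $ inv p i)" unfolding wsum_def
    by (subst sum.reindex) (auto intro: inj_on_subset permutes_inj[OF permutes_inv[OF p]])
  then show ?thesis by (simp add: wsum_def perm_act_def)
qed

lemma is_wall_image:
  fixes p :: "'n::finite \<Rightarrow> 'n"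
  assumes "inj p"
  shows "is_wall g (p ` S) \<longleftrightarrow> is_wall g S"
  using card_image[OF inj_on_subset[OF assms subset_UNIV]] by (simp add: is_wall_def)

lemma heavy_walls_perm_act:
  assumes p: "p permutes (UNIV :: 'n::finite set)"
  shows "heavy_walls g (perm_act p x) = (`) p ` heavy_walls g x"
proof -
  have mem: "S \<in> heavy_walls g (perm_act p x) \<longleftrightarrow> inv p ` S \<in> heavy_walls g x" for S
    using wsum_perm_act[OF p] is_wall_image[OF permutes_inj[OF permutes_inv[OF p]]]
    by (simp add: heavy_walls_def)
  have "inv p ` p ` T = T" "p ` inv p ` T = T" for T
    using p by (simp_all add: image_comp permutes_inv_o)
  then show ?thesis using mem by (metis (no_types, lifting) image_iff subsetI subset_antisym)
qed

lemma card_heavy_walls_perm_act: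
  assumes p: "p permutes (UNIV :: 'n::finite set)"
  shows "card (heavy_walls g (perm_act p x)) = card (heavy_walls g x)"
proof -
  have "inj ((`) p)" using permutes_inj[OF p] by (simp add: inj_def inj_image_eq_iff)
  then show ?thesis unfolding heavy_walls_perm_act[OF p] by (simp add: card_image inj_on_subset)
qed

lemma chamber_memberD:
  assumes "C \<in> chambers g" and "x \<in> C"
  shows "weight_datum g x" and "y \<in> C \<Longrightarrow> heavy_walls g y = heavy_walls g x"
  using assms by (auto simp: chambers_def chamber_def heavy_walls_def)

lemma heavy_walls_mono_of_chamber_le:
  assumes C1: "C1 \<in> chambers g" and A: "A \<in> C1" and B: "B \<in> C2"
    and \<sigma>: "\<sigma> permutes (UNIV :: 'n::finite set)"
    and le: "chamber_le g (perm_act \<sigma> ` C1) (perm_act \<tau> ` C2)"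
  shows "heavy_walls g (perm_act \<sigma> A) \<subseteq> heavy_walls g (perm_act \<tau> B)"
proof
  fix S assume S: "S \<in> heavy_walls g (perm_act \<sigma> A)"
  have "heavy_walls g a = heavy_walls g (perm_act \<sigma> A)" if "a \<in> perm_act \<sigma> ` C1" for a
    using that chamber_memberD(2)[OF C1 A] by (auto simp: heavy_walls_perm_act[OF \<sigma>])
  then have "\<forall>a\<in>perm_act \<sigma> ` C1. 1 < wsum S a" using S by (auto simp: heavy_walls_def)
  then have "1 < wsum S (perm_act \<tau> B)"
    using le S B by (auto simp: chamber_le_def heavy_walls_def)
  then show "S \<in> heavy_walls g (perm_act \<tau> B)" using S by (simp add: heavy_walls_def)
qed

lemma card_heavy_walls_eq_of_sym_class_eq:
  assumes C1: "C1 \<in> chambers g" and C2: "C2 \<in> chambers g" and A: "A \<in> C1" and B: "B \<in> C2"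
    and eq: "sym_class C1 = sym_class C2"
  shows "card (heavy_walls g A) = card (heavy_walls g (B :: real^'n::finite))"
proof -
  have "perm_act id ` C1 = C1" by (auto simp: perm_act_id)
  then have "C1 \<in> sym_class C1" unfolding sym_class_def using permutes_id by blast
  then have "C1 \<in> sym_class C2" by (simp only: eq)
  then obtain \<pi> where \<pi>: "\<pi> permutes (UNIV :: 'n set)" and "C1 = perm_act \<pi> ` C2"
    by (auto simp: sym_class_def)
  with A obtain B0 where "B0 \<in> C2" "A = perm_act \<pi> B0" by blast
  then show ?thesis
    using card_heavy_walls_perm_act[OF \<pi>] chamber_memberD(2)[OF C2 B] by simp
qed

theorem mainTheorem5:
  fixes g :: nat and C1 C2 :: "(real^('n::finite)) set" and A B :: "real^'n"
  assumes "C1 \<in> chambers g" and "C2 \<in> chambers g"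
    and "A \<in> C1" and "B \<in> C2"
    and "class_le g (sym_class C1) (sym_class C2)"
  shows "\<exists>Fo Fm. full_embedding g A B Fo Fm \<and>
           (sym_class C1 = sym_class C2 \<longrightarrow> cat_isomorphism g A B Fo Fm)"
proof -
  obtain \<sigma> \<tau> where \<sigma>: "\<sigma> permutes (UNIV :: 'n set)" and \<tau>: "\<tau> permutes (UNIV :: 'n set)"
    and le: "chamber_le g (perm_act \<sigma> ` C1) (perm_act \<tau> ` C2)"
    using assms(5) unfolding class_le_def sym_class_def by blast
  define p where "p = inv \<tau> \<circ> \<sigma>"
  have p: "p permutes (UNIV :: 'n set)"
    unfolding p_def using permutes_compose[OF \<sigma> permutes_inv[OF \<tau>]] .
  have wA: "weight_datum g A" and wB: "weight_datum g B"
    using chamber_memberD(1) assms(1-4) by blast+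
  have "heavy_walls g (perm_act p A) = (`) (inv \<tau>) ` heavy_walls g (perm_act \<sigma> A)"
    unfolding p_def
    using heavy_walls_perm_act[OF permutes_inv[OF \<tau>]] perm_act_comp[OF permutes_inv[OF \<tau>] \<sigma>]
    by metis
  also have "\<dots> \<subseteq> (`) (inv \<tau>) ` heavy_walls g (perm_act \<tau> B)"
    using heavy_walls_mono_of_chamber_le[OF assms(1,3,4) \<sigma> le] by blast
  also have "\<dots> = heavy_walls g B"
    using heavy_walls_perm_act[OF permutes_inv[OF \<tau>]] perm_act_inv[OF \<tau>] by metis
  finally have heavy: "heavy_walls g (perm_act p A) \<subseteq> heavy_walls g B" .
  have "heavy_walls g (perm_act p A) = heavy_walls g B" if "sym_class C1 = sym_class C2"
    using card_subset_eq[OF finite heavy] card_heavy_walls_perm_act[OF p]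
      card_heavy_walls_eq_of_sym_class_eq[OF assms(1-4) that] by simp
  then show ?thesis
    using full_embedding_relabel[OF p wA wB heavy] cat_isomorphism_relabel[OF p wA wB] by blast
qed

end
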